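(* Let $\alpha\in[1,2)$, $\nu_\alpha=\frac{\alpha-1}{2-\alpha}$, $\kappa_\alpha=\frac{2-\alpha}2$, and $m\ge1$. The functions $$\Phi^{(r)}_{\alpha,m}(x)=\begin{cases}x^{\frac{1-\alpha}2}J_{\nu_\alpha}(j_{\nu_\alpha,m}x^{\kappa_\alpha}) & x\in(0,1)\\0 & x\in(-1,0)\end{cases},\qquad \Phi^{(l)}_{\alpha,m}(x)=\begin{cases}0 & x\in(0,1)\\ |x|^{\frac{1-\alpha}2}J_{\nu_\alpha}(j_{\nu_\alpha,m}|x|^{\kappa_\alpha}) & x\in(-1,0)\end{cases}$$ belong to $H^2_\alpha(-1,1)$.
   Context: Let $\alpha\in[1,2)$. $H^1_\alpha(-1,1)$ is the set of $u\in L^2(-1,1)$ locally absolutely continuous on $(0,1]$ and on $[-1,0)$, with $\int_{-1}^1|x|^\alpha u_x^2\,dx<\infty$ and $u(-1)=0=u(1)$; $H^2_\alpha(-1,1)=\{u\in H^1_\alpha(-1,1):(|x|^\alpha u')'\in L^2(-1,1)\}$ (distributional derivative on $(-1,1)$). $J_\nu$ is the Bessel function of the first kind of order $\nu$ and $0<j_{\nu,1}<j_{\nu,2}<\cdots$ its positive zeros. *)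

theory Defs
  imports "HOL-Analysis.Analysis"
begin

definition bessel_J :: "real \<Rightarrow> real \<Rightarrow> real" where
  "bessel_J nu x = (\<Sum>k. (-1) ^ k / (fact k * Gamma (real k + nu + 1)) * (x / 2) powr (2 * real k + nu))"

text \<open>The m-th positive zero j_{nu,m} of J_nu (m >= 1), zeros ordered increasingly.\<close>
definition bessel_zero :: "real \<Rightarrow> nat \<Rightarrow> real" where
  "bessel_zero nu m = (THE z. 0 < z \<and> bessel_J nu z = 0 \<and>
      card {y. 0 < y \<and> y < z \<and> bessel_J nu y = 0} = m - 1)"

definition abs_cont_on :: "real set \<Rightarrow> (real \<Rightarrow> real) \<Rightarrow> bool" where
  "abs_cont_on I u \<longleftrightarrow> (\<forall>\<epsilon>>0. \<exists>\<delta>>0. \<forall>(n::nat) (a::nat \<Rightarrow> real) b.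
      (\<forall>k<n. a k \<le> b k \<and> {a k..b k} \<subseteq> I) \<and>
      (\<forall>k<n. \<forall>l<n. k \<noteq> l \<longrightarrow> b k \<le> a l \<or> b l \<le> a k) \<and>
      (\<Sum>k<n. b k - a k) < \<delta> \<longrightarrow> (\<Sum>k<n. \<bar>u (b k) - u (a k)\<bar>) < \<epsilon>)"

definition loc_abs_cont_on :: "real set \<Rightarrow> (real \<Rightarrow> real) \<Rightarrow> bool" where
  "loc_abs_cont_on I u \<longleftrightarrow> (\<forall>a b. a \<le> b \<and> {a..b} \<subseteq> I \<longrightarrow> abs_cont_on {a..b} u)"

definition L2_11 :: "(real \<Rightarrow> real) \<Rightarrow> bool" where
  "L2_11 u \<longleftrightarrow> set_integrable lebesgue {-1<..<1} (\<lambda>x. (u x)\<^sup>2)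
      \<and> set_borel_measurable lebesgue {-1<..<1} u"

definition ae_deriv :: "(real \<Rightarrow> real) \<Rightarrow> (real \<Rightarrow> real) \<Rightarrow> bool" where
  "ae_deriv u g \<longleftrightarrow> (AE x in lebesgue. x \<in> {-1<..<1} \<longrightarrow> (u has_real_derivative g x) (at x))"

definition H1_alpha :: "real \<Rightarrow> (real \<Rightarrow> real) set" where
  "H1_alpha \<alpha> = {u. L2_11 u \<and> loc_abs_cont_on {0<..1} u \<and> loc_abs_cont_on {-1..<0} u \<and>
      (\<exists>g. ae_deriv u g \<and> set_integrable lebesgue {-1<..<1} (\<lambda>x. \<bar>x\<bar> powr \<alpha> * (g x)\<^sup>2)) \<and>
      u (-1) = 0 \<and> u 1 = 0}"

definition test_fun :: "(real \<Rightarrow> real) \<Rightarrow> bool" where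
  "test_fun \<phi> \<longleftrightarrow> (\<forall>k x. ((deriv ^^ k) \<phi>) differentiable (at x)) \<and>
      (\<exists>a b. -1 < a \<and> a \<le> b \<and> b < 1 \<and> (\<forall>x. x \<notin> {a..b} \<longrightarrow> \<phi> x = 0))"

text \<open>H^2_alpha: (|x|^alpha u')' (distributional derivative on (-1,1)) lies in L^2(-1,1).\<close>
definition H2_alpha :: "real \<Rightarrow> (real \<Rightarrow> real) set" where
  "H2_alpha \<alpha> = {u. u \<in> H1_alpha \<alpha> \<and>
      (\<exists>g w. ae_deriv u g \<and> L2_11 w \<and>
        (\<forall>\<phi>. test_fun \<phi> \<longrightarrow>
           (LINT x:{-1<..<1}|lebesgue. \<bar>x\<bar> powr \<alpha> * g x * deriv \<phi> x)
             = - (LINT x:{-1<..<1}|lebesgue. w x * \<phi> x)))}"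

definition nu_a :: "real \<Rightarrow> real" where "nu_a \<alpha> = (\<alpha> - 1) / (2 - \<alpha>)"
definition kappa_a :: "real \<Rightarrow> real" where "kappa_a \<alpha> = (2 - \<alpha>) / 2"

definition Phi_r :: "real \<Rightarrow> nat \<Rightarrow> real \<Rightarrow> real" where
  "Phi_r \<alpha> m x = (if 0 < x \<and> x < 1 then
      x powr ((1 - \<alpha>) / 2) * bessel_J (nu_a \<alpha>) (bessel_zero (nu_a \<alpha>) m * x powr kappa_a \<alpha>) else 0)"

definition Phi_l :: "real \<Rightarrow> nat \<Rightarrow> real \<Rightarrow> real" where
  "Phi_l \<alpha> m x = (if -1 < x \<and> x < 0 then
      \<bar>x\<bar> powr ((1 - \<alpha>) / 2) * bessel_J (nu_a \<alpha>) (bessel_zero (nu_a \<alpha>) m * \<bar>x\<bar> powr kappa_a \<alpha>) else 0)"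

end

theory Submission
  imports Defs "HOL-Complex_Analysis.Complex_Analysis"
begin

text \<open>
  Write J_nu(y) = (y/2)^nu B(y^2), where B = bessel_series nu is entire. With beta = 2 - alpha,
  nu = (alpha - 1)/beta and j = j_{nu,m}, the right function is Phi(x) = C B(j^2 x^beta) on (0,1).
  Bessel's equation for B becomes (x^alpha Phi')' = -lambda Phi with lambda = j^2 beta^2/4, and the
  flux x^alpha Phi'(x) = C j^2 beta x B'(j^2 x^beta) vanishes at x = 0. Integrating by parts against
  a test function therefore leaves no boundary term (at 0 the flux vanishes, at 1 the test
  function), so (|x|^alpha Phi')' = -lambda Phi lies in L^2. Since j is a zero of J_nu, Phi(1) = 0,
  which makes the extension by zero absolutely continuous up to x = 1. The left function is the
  reflection of the right one. Finally, j_{nu,m} exists because the positive zeros of J_nu are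
  discrete (identity theorem for B) and unbounded (Sturm comparison of sqrt(y) J_nu(y) with
  sin(y/2)).
\<close>

section \<open>Enumerating discrete sets, and zeros of real functions\<close>

lemma ex_least_if_finite_below:
  fixes S Z :: "'a :: linorder set"
  assumes fin: "\<And>x. finite {z \<in> Z. z \<le> x}" and "S \<subseteq> Z" "y \<in> S"
  shows "\<exists>z\<in>S. \<forall>x\<in>S. z \<le> x"
proof -
  have "finite {x \<in> S. x \<le> y}"
    by (rule finite_subset[OF _ fin[of y]]) (use \<open>S \<subseteq> Z\<close> in auto)
  then have "Min {x \<in> S. x \<le> y} \<in> S" "Min {x \<in> S. x \<le> y} \<le> y"
    and "\<And>x. x \<in> S \<Longrightarrow> x \<le> y \<Longrightarrow> Min {x \<in> S. x \<le> y} \<le> x"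
    using Min_in[of "{x \<in> S. x \<le> y}"] \<open>y \<in> S\<close> by auto
  then show ?thesis by (meson order.trans nle_le)
qed

lemma ex1_card_less:
  fixes Z :: "'a :: linorder set"
  assumes fin: "\<And>x. finite {z \<in> Z. z \<le> x}" and unbounded: "\<And>x. \<exists>z\<in>Z. x < z"
  shows "\<exists>!z. z \<in> Z \<and> card {y \<in> Z. y < z} = n"
proof (rule ex_ex1I)
  have fin_less: "finite {y \<in> Z. y < z}" for z
    by (rule finite_subset[OF _ fin[of z]]) auto
  show "\<exists>z. z \<in> Z \<and> card {y \<in> Z. y < z} = n"
  proof (induction n)
    case 0
    obtain z0 where "z0 \<in> Z" using unbounded by blast
    then obtain z where "z \<in> Z" "\<forall>y\<in>Z. z \<le> y"
      using ex_least_if_finite_below[OF fin order.refl] by blast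
    then have "{y \<in> Z. y < z} = {}" by (auto simp: not_less[symmetric])
    then show ?case using \<open>z \<in> Z\<close> by (metis card.empty)
  next
    case (Suc n)
    then obtain z where z: "z \<in> Z" "card {y \<in> Z. y < z} = n" by blast
    obtain z1 where "z1 \<in> Z" "z < z1" using unbounded by blast
    then obtain z' where z': "z' \<in> Z" "z < z'" and least: "\<forall>y\<in>Z. z < y \<longrightarrow> z' \<le> y"
      using ex_least_if_finite_below[OF fin, of "{y \<in> Z. z < y}" z1] by auto
    have "{y \<in> Z. y < z'} = insert z {y \<in> Z. y < z}"
      using z z' least by (auto simp: not_less[symmetric] le_less intro: less_trans)
    then have "card {y \<in> Z. y < z'} = Suc n" using z fin_less[of z] by simp
    then show ?case using z' by blast
  qed
  have card_less: "card {y \<in> Z. y < a} < card {y \<in> Z. y < b}" if "a \<in> Z" "a < b" for a b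
    using that by (intro psubset_card_mono fin_less) auto
  fix z1 z2
  assume "z1 \<in> Z \<and> card {y \<in> Z. y < z1} = n" and "z2 \<in> Z \<and> card {y \<in> Z. y < z2} = n"
  then show "z1 = z2"
    using card_less[of z1 z2] card_less[of z2 z1] by (cases z1 z2 rule: linorder_cases) auto
qed

lemma finite_zeros_real_power_series:
  fixes c :: "nat \<Rightarrow> real"
  assumes conv: "\<And>z::complex. summable (\<lambda>k. of_real (c k) * z ^ k)" and "c 0 \<noteq> 0"
  shows "finite {s. \<bar>s\<bar> \<le> R \<and> (\<Sum>k. c k * s ^ k) = 0}"
proof (rule ccontr)
  define P where "P z = (\<Sum>k. of_real (c k) * z ^ k)" for z :: complex
  let ?Z = "{s. \<bar>s\<bar> \<le> R \<and> (\<Sum>k. c k * s ^ k) = 0}"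
  assume "infinite ?Z"
  then have "infinite (complex_of_real ` ?Z)"
    by (auto dest: finite_imageD simp: inj_on_def)
  moreover have "complex_of_real ` ?Z \<subseteq> cball 0 R" by auto
  ultimately obtain \<xi> where lim: "\<xi> islimpt (complex_of_real ` ?Z)"
    using Heine_Borel_imp_Bolzano_Weierstrass[OF compact_cball] by blast
  have holo: "P holomorphic_on UNIV"
    unfolding P_def field_differentiable_def holomorphic_on_def
    using termdiffs_strong_converges_everywhere[OF conv] by blast
  have real: "P (of_real s) = of_real (\<Sum>k. c k * s ^ k)" for s
  proof -
    have "summable (\<lambda>k. c k * s ^ k)"
      using conv[of "of_real s"] by (simp flip: summable_complex_of_real)
    from suminf_of_real[OF this, where 'a = complex] show ?thesis
      unfolding P_def by simp
  qed
  have "z \<in> complex_of_real ` ?Z \<Longrightarrow> P z = 0" for z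
    using real by auto
  from analytic_continuation[OF holo open_UNIV connected_UNIV subset_UNIV UNIV_I lim this UNIV_I]
  have "P 0 = 0" .
  then show False using \<open>c 0 \<noteq> 0\<close> by (simp add: P_def)
qed

lemma continuous_on_nonvanishing_sign:
  fixes u :: "real \<Rightarrow> real"
  assumes "continuous_on {a..b} u" and "\<And>t. t \<in> {a..b} \<Longrightarrow> u t \<noteq> 0" and "t \<in> {a..b}"
  shows "0 < u a * u t"
proof (rule ccontr)
  assume "\<not> 0 < u a * u t"
  moreover have "continuous_on {a..t} (\<lambda>s. u a * u s)"
    using assms(3) by (intro continuous_intros continuous_on_subset[OF assms(1)]) auto
  ultimately obtain s where "a \<le> s" "s \<le> t" "u a * u s = 0"
    using IVT2'[of "\<lambda>s. u a * u s" t 0 a] assms(3) by auto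
  then show False using assms(2)[of s] assms(2)[of a] assms(3) by auto
qed

lemma sturm_comparison_zero:
  fixes u u' q :: "real \<Rightarrow> real" and A :: real
  defines "B \<equiv> A + 2 * pi"
  assumes u: "\<And>t. t \<in> {A..B} \<Longrightarrow> (u has_real_derivative u' t) (at t)"
    and u': "\<And>t. t \<in> {A..B} \<Longrightarrow> (u' has_real_derivative - q t * u t) (at t)"
    and q: "\<And>t. t \<in> {A..B} \<Longrightarrow> 1/4 < q t"
  shows "\<exists>t\<in>{A..B}. u t = 0"
proof (rule ccontr)
  assume "\<not> ?thesis"
  then have sign: "0 < u A * u t" if "t \<in> {A..B}" for t
    using that u
    by (intro continuous_on_nonvanishing_sign has_real_derivative_imp_continuous_on) auto
  \<comment> \<open>The Wronskian of u and sin((t - A)/2), a solution of v'' + v/4 = 0 vanishing at A and B.\<close>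
  define W where "W t = u' t * sin ((t - A) / 2) - u t * cos ((t - A) / 2) / 2" for t
  define W' where "W' t = (1/4 - q t) * u t * sin ((t - A) / 2)" for t
  have "(W has_real_derivative W' t) (at t)" if "t \<in> {A..B}" for t
    unfolding W_def W'_def
    by (rule derivative_eq_intros u[OF that] u'[OF that] refl | simp)+ (simp add: field_simps)
  moreover have "A < B" unfolding B_def by simp
  ultimately obtain z where z: "A < z" "z < B" and mvt: "W B - W A = (B - A) * W' z"
    using MVT2[of A B W W'] by (metis atLeastAtMost_iff)
  have "u A * (W B - W A) = (u A * u B + u A * u A) / 2" by (simp add: W_def B_def field_simps)
  moreover have "0 < u A * u B + u A * u A" using sign[of B] \<open>A < B\<close> by (intro add_pos_nonneg) auto
  ultimately have "0 < u A * (W B - W A)" by simp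
  moreover have "u A * W' z < 0"
  proof -
    have "u A * W' z = (1/4 - q z) * (u A * u z) * sin ((z - A) / 2)"
      by (simp add: W'_def algebra_simps)
    also have "\<dots> < 0"
      using z q[of z] sign[of z] by (intro mult_neg_pos sin_gt_zero) (auto simp: B_def)
    finally show ?thesis .
  qed
  ultimately show False
    using mvt \<open>A < B\<close> mult_pos_neg[of "B - A" "u A * W' z"] by (simp add: mult_ac)
qed

section \<open>The Bessel series and its zeros\<close>

definition bessel_coeff :: "real \<Rightarrow> nat \<Rightarrow> real" where
  "bessel_coeff nu k = (-1) ^ k / (fact k * Gamma (real k + nu + 1) * 4 ^ k)"

definition bessel_series :: "real \<Rightarrow> real \<Rightarrow> real" where
  "bessel_series nu s = (\<Sum>k. bessel_coeff nu k * s ^ k)"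

definition bessel_series' :: "real \<Rightarrow> real \<Rightarrow> real" where
  "bessel_series' nu s = (\<Sum>k. diffs (bessel_coeff nu) k * s ^ k)"

definition bessel_series'' :: "real \<Rightarrow> real \<Rightarrow> real" where
  "bessel_series'' nu s = (\<Sum>k. diffs (diffs (bessel_coeff nu)) k * s ^ k)"

lemma bessel_coeff_Suc:
  assumes "-1 < nu"
  shows "bessel_coeff nu (Suc k) = - bessel_coeff nu k / (4 * (real k + 1) * (real k + nu + 1))"
proof -
  have pos: "0 < real k + nu + 1" using assms by simp
  then have "real k + nu + 1 \<notin> \<int>\<^sub>\<le>\<^sub>0" by auto
  then have "Gamma (real (Suc k) + nu + 1) = (real k + nu + 1) * Gamma (real k + nu + 1)"
    using Gamma_plus1[of "real k + nu + 1"] by (simp add: add_ac)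
  moreover have "Gamma (real k + nu + 1) > 0" using pos by simp
  ultimately show ?thesis using pos unfolding bessel_coeff_def by (simp add: field_simps)
qed

lemma summable_bessel_coeff:
  fixes z :: "'a :: {real_normed_field, banach}"
  assumes "-1 < nu"
  shows "summable (\<lambda>k. of_real (bessel_coeff nu k) * z ^ k)"
proof (rule summable_ratio_test[where c = "1/2" and N = "nat \<lceil>norm z\<rceil> + 1"])
  fix n assume n: "nat \<lceil>norm z\<rceil> + 1 \<le> n"
  let ?D = "4 * (real n + 1) * (real n + nu + 1)"
  have "norm z \<le> real n" "1 \<le> real n" using n by linarith+
  then have "2 * norm z \<le> 4 * (real n + 1) * (1/2)" by simp
  also have "\<dots> \<le> ?D"
    using assms \<open>1 \<le> real n\<close> by (intro mult_left_mono) auto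
  finally have "norm z / ?D \<le> 1/2"
    using assms by (simp add: divide_le_eq)
  then have "\<bar>bessel_coeff nu n\<bar> * (norm z / ?D) \<le> \<bar>bessel_coeff nu n\<bar> * (1/2)"
    by (rule mult_left_mono) simp
  then have "\<bar>bessel_coeff nu (Suc n)\<bar> * norm z \<le> \<bar>bessel_coeff nu n\<bar> / 2"
    using assms by (simp add: bessel_coeff_Suc abs_mult)
  from mult_right_mono[OF this, of "norm z ^ n"]
  show "norm (of_real (bessel_coeff nu (Suc n)) * z ^ Suc n)
      \<le> 1/2 * norm (of_real (bessel_coeff nu n) * z ^ n)"
    by (simp add: norm_mult norm_power mult_ac)
qed simp

lemma summable_bessel_series:
  "-1 < nu \<Longrightarrow> summable (\<lambda>k. bessel_coeff nu k * s ^ k)"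
  using summable_bessel_coeff[where 'a = real] by simp

lemma has_real_derivative_bessel_series:
  "-1 < nu \<Longrightarrow> (bessel_series nu has_real_derivative bessel_series' nu s) (at s)"
  unfolding bessel_series_def bessel_series'_def
  by (rule termdiffs_strong_converges_everywhere) (rule summable_bessel_series)

lemma has_real_derivative_bessel_series':
  "-1 < nu \<Longrightarrow> (bessel_series' nu has_real_derivative bessel_series'' nu s) (at s)"
  unfolding bessel_series'_def bessel_series''_def
  by (rule termdiffs_strong_converges_everywhere, rule termdiff_converges_all)
     (rule summable_bessel_series)

lemma bessel_series_chain [derivative_intros]:
  "-1 < nu \<Longrightarrow> (f has_real_derivative f') (at x within S) \<Longrightarrow>
    ((\<lambda>x. bessel_series nu (f x)) has_real_derivative bessel_series' nu (f x) * f')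
      (at x within S)"
  using DERIV_chain2[OF has_real_derivative_bessel_series] by blast

lemma bessel_series'_chain [derivative_intros]:
  "-1 < nu \<Longrightarrow> (f has_real_derivative f') (at x within S) \<Longrightarrow>
    ((\<lambda>x. bessel_series' nu (f x)) has_real_derivative bessel_series'' nu (f x) * f')
      (at x within S)"
  using DERIV_chain2[OF has_real_derivative_bessel_series'] by blast

lemma continuous_on_bessel_series [continuous_intros]:
  "-1 < nu \<Longrightarrow> continuous_on S f \<Longrightarrow> continuous_on S (\<lambda>x. bessel_series nu (f x))"
  by (rule continuous_on_compose2[of UNIV, OF DERIV_continuous_on])
     (auto intro: has_real_derivative_bessel_series)

lemma continuous_on_bessel_series' [continuous_intros]:
  "-1 < nu \<Longrightarrow> continuous_on S f \<Longrightarrow> continuous_on S (\<lambda>x. bessel_series' nu (f x))"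
  by (rule continuous_on_compose2[of UNIV, OF DERIV_continuous_on])
     (auto intro: has_real_derivative_bessel_series')

lemma bessel_series_ode:
  assumes "-1 < nu"
  shows "s * bessel_series'' nu s + (nu + 1) * bessel_series' nu s + bessel_series nu s / 4 = 0"
proof -
  let ?c = "bessel_coeff nu"
  have s0: "(\<lambda>k. ?c k * s ^ k) sums bessel_series nu s"
    unfolding bessel_series_def by (intro summable_sums summable_bessel_series assms)
  have s1: "(\<lambda>k. diffs ?c k * s ^ k) sums bessel_series' nu s"
    unfolding bessel_series'_def
    by (intro summable_sums termdiff_converges_all summable_bessel_series assms)
  have "(\<lambda>k. diffs (diffs ?c) k * s ^ k * s) sums (bessel_series'' nu s * s)"
    unfolding bessel_series''_def
    by (intro sums_mult2 summable_sums termdiff_converges_all summable_bessel_series assms)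
  then have s2: "(\<lambda>k. real k * diffs ?c k * s ^ k) sums (s * bessel_series'' nu s)"
    using sums_Suc_iff[of "\<lambda>k. real k * diffs ?c k * s ^ k"] by (simp add: diffs_def mult_ac)
  have "(\<lambda>k. real k * diffs ?c k * s ^ k + (nu + 1) * (diffs ?c k * s ^ k) + ?c k * s ^ k / 4) sums
      (s * bessel_series'' nu s + (nu + 1) * bessel_series' nu s + bessel_series nu s / 4)"
    by (intro sums_add sums_mult sums_divide s0 s1 s2)
  moreover have
    "real k * diffs ?c k * s ^ k + (nu + 1) * (diffs ?c k * s ^ k) + ?c k * s ^ k / 4 = 0" for k
  proof -
    have "0 < real k + nu + 1" using assms by simp
    then have "(real k + nu + 1) * diffs ?c k = - ?c k / 4"
      unfolding diffs_def bessel_coeff_Suc[OF assms] by (simp add: divide_simps)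
    moreover have "real k * diffs ?c k * s ^ k + (nu + 1) * (diffs ?c k * s ^ k) + ?c k * s ^ k / 4
        = ((real k + nu + 1) * diffs ?c k + ?c k / 4) * s ^ k"
      by (simp add: algebra_simps)
    ultimately show ?thesis by simp
  qed
  ultimately show ?thesis by (simp add: sums_iff)
qed

lemma bessel_J_eq_bessel_series:
  assumes "-1 < nu" and "0 < y"
  shows "bessel_J nu y = (y / 2) powr nu * bessel_series nu (y\<^sup>2)"
proof -
  have "(-1) ^ k / (fact k * Gamma (real k + nu + 1)) * (y / 2) powr (2 * real k + nu)
      = (y / 2) powr nu * (bessel_coeff nu k * (y\<^sup>2) ^ k)" for k
  proof -
    have "(y / 2) powr (2 * real k) = (y / 2) ^ (2 * k)"
      using powr_realpow[of "y / 2" "2 * k"] \<open>0 < y\<close> by simp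
    also have "\<dots> = (y\<^sup>2) ^ k / 4 ^ k"
      by (simp add: power_mult power_divide)
    finally have "(y / 2) powr (2 * real k + nu) = (y / 2) powr nu * (y\<^sup>2) ^ k / 4 ^ k"
      by (simp add: powr_add)
    then show ?thesis by (simp add: bessel_coeff_def)
  qed
  then show ?thesis
    unfolding bessel_J_def bessel_series_def
    by (simp add: suminf_mult summable_bessel_series[OF \<open>-1 < nu\<close>])
qed

lemma bessel_series_zero_in_interval:
  assumes nu: "-1 < nu" and A: "nu\<^sup>2 + 2 \<le> A"
  shows "\<exists>y\<in>{A..A + 2 * pi}. bessel_series nu (y\<^sup>2) = 0"
proof -
  \<comment> \<open>u is a constant multiple of the Liouville normal form sqrt y * J_nu y of the Bessel function.\<close>
  define a where "a = nu + 1/2"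
  define u where "u y = y powr a * bessel_series nu (y\<^sup>2)" for y
  define u' where
    "u' y = y powr (a - 1) * (a * bessel_series nu (y\<^sup>2) + 2 * y\<^sup>2 * bessel_series' nu (y\<^sup>2))" for y
  define q where "q y = 1 - (nu\<^sup>2 - 1/4) / y\<^sup>2" for y
  have "(u has_real_derivative u' y) (at y)" if "0 < y" for y
    unfolding u_def u'_def using nu that
    by (auto intro!: derivative_eq_intros) (simp add: powr_diff field_simps power2_eq_square)
  moreover have "(u' has_real_derivative - q y * u y) (at y)" if "0 < y" for y
  proof -
    let ?B = "bessel_series nu (y\<^sup>2)" and ?B' = "bessel_series' nu (y\<^sup>2)"
      and ?B'' = "bessel_series'' nu (y\<^sup>2)"
    have "(u' has_real_derivative y powr a / y\<^sup>2 *
        (a * (a - 1) * ?B + (4 * a + 2) * y\<^sup>2 * ?B' + 4 * y\<^sup>2 * (y\<^sup>2 * ?B''))) (at y)"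
      unfolding u'_def using nu that
      by (auto intro!: derivative_eq_intros) (simp add: powr_diff field_simps power2_eq_square)
    moreover have ode: "y\<^sup>2 * ?B'' = - (nu + 1) * ?B' - ?B / 4"
      using bessel_series_ode[OF nu, of "y\<^sup>2"] by (simp add: algebra_simps)
    have "a * (a - 1) * ?B + (4 * a + 2) * y\<^sup>2 * ?B' + 4 * y\<^sup>2 * (y\<^sup>2 * ?B'')
        = (a * (a - 1) - y\<^sup>2) * ?B"
      unfolding ode by (simp add: a_def algebra_simps)
    moreover have "y powr a / y\<^sup>2 * ((a * (a - 1) - y\<^sup>2) * ?B) = - q y * u y"
      using that unfolding q_def u_def a_def by (simp add: field_simps power2_eq_square)
    ultimately show ?thesis by simp
  qed
  moreover have "1/4 < q y" if "A \<le> y" for y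
  proof -
    have "2 \<le> y" "nu\<^sup>2 \<le> y" using A that zero_le_power2[of nu] by linarith+
    moreover have "y \<le> y\<^sup>2 / 2"
      using \<open>2 \<le> y\<close> by (simp add: power2_eq_square)
    ultimately have "nu\<^sup>2 - 1/4 < 3/4 * y\<^sup>2" by simp
    then show ?thesis using \<open>2 \<le> y\<close> by (simp add: q_def field_simps)
  qed
  moreover have "0 < A" using A zero_le_power2[of nu] by linarith
  ultimately have "\<exists>y\<in>{A..A + 2 * pi}. u y = 0"
    by (intro sturm_comparison_zero[of A u u' q]) auto
  then show ?thesis using \<open>0 < A\<close> by (auto simp: u_def)
qed

lemma bessel_J_zeros_finite:
  assumes "-1 < nu"
  shows "finite {y. 0 < y \<and> bessel_J nu y = 0 \<and> y \<le> R}"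
proof -
  have "Gamma (nu + 1) > 0" using assms by (intro Gamma_real_pos) simp
  then have "bessel_coeff nu 0 \<noteq> 0" by (simp add: bessel_coeff_def)
  then have "finite {s. \<bar>s\<bar> \<le> R\<^sup>2 \<and> bessel_series nu s = 0}"
    unfolding bessel_series_def
    by (intro finite_zeros_real_power_series summable_bessel_coeff assms)
  then have "finite (sqrt ` {s. \<bar>s\<bar> \<le> R\<^sup>2 \<and> bessel_series nu s = 0})" by simp
  moreover have "{y. 0 < y \<and> bessel_J nu y = 0 \<and> y \<le> R}
      \<subseteq> sqrt ` {s. \<bar>s\<bar> \<le> R\<^sup>2 \<and> bessel_series nu s = 0}"
  proof
    fix y assume y: "y \<in> {y. 0 < y \<and> bessel_J nu y = 0 \<and> y \<le> R}"
    then have "bessel_series nu (y\<^sup>2) = 0" "y\<^sup>2 \<le> R\<^sup>2"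
      using bessel_J_eq_bessel_series[OF assms, of y] by (auto intro: power_mono)
    then show "y \<in> sqrt ` {s. \<bar>s\<bar> \<le> R\<^sup>2 \<and> bessel_series nu s = 0}"
      using y by (intro image_eqI[of _ _ "y\<^sup>2"]) auto
  qed
  ultimately show ?thesis by (rule finite_subset[rotated])
qed

lemma bessel_J_zeros_unbounded:
  assumes "-1 < nu"
  shows "\<exists>y. 0 < y \<and> bessel_J nu y = 0 \<and> x < y"
proof -
  obtain y where y: "max (x + 1) (nu\<^sup>2 + 2) \<le> y" "bessel_series nu (y\<^sup>2) = 0"
    using bessel_series_zero_in_interval[OF assms, of "max (x + 1) (nu\<^sup>2 + 2)"] by auto
  moreover have "0 < y" using y(1) zero_le_power2[of nu] by linarith
  ultimately show ?thesis
    using bessel_J_eq_bessel_series[OF assms] by (intro exI[of _ y]) auto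
qed

lemma bessel_zero_is_root:
  assumes "-1 < nu"
  shows "0 < bessel_zero nu m \<and> bessel_J nu (bessel_zero nu m) = 0"
proof -
  let ?Z = "{y. 0 < y \<and> bessel_J nu y = 0}"
  have "\<exists>!z. z \<in> ?Z \<and> card {y \<in> ?Z. y < z} = m - 1"
    using bessel_J_zeros_finite[OF assms] bessel_J_zeros_unbounded[OF assms]
    by (intro ex1_card_less) simp_all
  moreover have "{y \<in> ?Z. y < z} = {y. 0 < y \<and> y < z \<and> bessel_J nu y = 0}" for z
    by auto
  ultimately have
    "\<exists>!z. 0 < z \<and> bessel_J nu z = 0 \<and> card {y. 0 < y \<and> y < z \<and> bessel_J nu y = 0} = m - 1"
    by simp
  from theI'[OF this] show ?thesis unfolding bessel_zero_def by blast
qed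

section \<open>Zero extensions in the weighted Sobolev space\<close>

lemma abs_cont_on_lipschitz:
  assumes "L-lipschitz_on I u"
  shows "abs_cont_on I u"
  unfolding abs_cont_on_def
proof (intro allI impI)
  fix \<epsilon> :: real assume "0 < \<epsilon>"
  have "0 \<le> L" using assms by (rule lipschitz_on_nonneg)
  define \<delta> where "\<delta> = \<epsilon> / (L + 1)"
  have "0 < \<delta>" "L * \<delta> < \<epsilon>"
    using \<open>0 < \<epsilon>\<close> \<open>0 \<le> L\<close> by (auto simp: \<delta>_def field_simps)
  show "\<exists>\<delta>>0. \<forall>(n::nat) (a::nat \<Rightarrow> real) b.
      (\<forall>k<n. a k \<le> b k \<and> {a k..b k} \<subseteq> I) \<and>
      (\<forall>k<n. \<forall>l<n. k \<noteq> l \<longrightarrow> b k \<le> a l \<or> b l \<le> a k) \<and>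
      (\<Sum>k<n. b k - a k) < \<delta> \<longrightarrow> (\<Sum>k<n. \<bar>u (b k) - u (a k)\<bar>) < \<epsilon>"
  proof (intro exI[of _ \<delta>] conjI allI impI \<open>0 < \<delta>\<close>)
    fix n :: nat and a b :: "nat \<Rightarrow> real"
    assume H: "(\<forall>k<n. a k \<le> b k \<and> {a k..b k} \<subseteq> I) \<and>
      (\<forall>k<n. \<forall>l<n. k \<noteq> l \<longrightarrow> b k \<le> a l \<or> b l \<le> a k) \<and> (\<Sum>k<n. b k - a k) < \<delta>"
    have "\<bar>u (b k) - u (a k)\<bar> \<le> L * (b k - a k)" if "k < n" for k
    proof -
      have "a k \<le> b k" "{a k..b k} \<subseteq> I" using H that by auto
      then have "a k \<in> I" "b k \<in> I" by auto
      then show ?thesis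
        using lipschitz_onD[OF assms, of "b k" "a k"] \<open>a k \<le> b k\<close> by (simp add: dist_real_def)
    qed
    then have "(\<Sum>k<n. \<bar>u (b k) - u (a k)\<bar>) \<le> L * (\<Sum>k<n. b k - a k)"
      by (auto simp: sum_distrib_left intro: sum_mono)
    also have "\<dots> \<le> L * \<delta>" using H \<open>0 \<le> L\<close> by (intro mult_left_mono) auto
    finally show "(\<Sum>k<n. \<bar>u (b k) - u (a k)\<bar>) < \<epsilon>" using \<open>L * \<delta> < \<epsilon>\<close> by simp
  qed
qed

lemma loc_abs_cont_onI_derivative:
  assumes f: "\<And>x. x \<in> I \<Longrightarrow> (f has_real_derivative f' x) (at x)"
    and "continuous_on I f'" and u: "\<And>x. x \<in> I \<Longrightarrow> u x = f x"
  shows "loc_abs_cont_on I u"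
  unfolding loc_abs_cont_on_def
proof (intro allI impI)
  fix a b :: real assume ab: "a \<le> b \<and> {a..b} \<subseteq> I"
  have "compact (f' ` {a..b})"
    using ab by (intro compact_continuous_image)
      (auto intro: continuous_on_subset[OF \<open>continuous_on I f'\<close>])
  then obtain B where "0 < B" and B: "\<And>x. x \<in> {a..b} \<Longrightarrow> \<bar>f' x\<bar> \<le> B"
    by (auto dest!: compact_imp_bounded simp: bounded_pos)
  have "B-lipschitz_on {a..b} f"
  proof (rule lipschitz_onI)
    fix x y assume "x \<in> {a..b}" "y \<in> {a..b}"
    then show "dist (f x) (f y) \<le> B * dist x y"
      using field_differentiable_bound[of "{a..b}" f f' B] ab f B
      by (auto simp: dist_real_def has_field_derivative_at_within subset_iff)
  qed (use \<open>0 < B\<close> in simp)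
  then have "B-lipschitz_on {a..b} u"
    using ab u by (auto simp: lipschitz_on_def subset_iff)
  then show "abs_cont_on {a..b} u" by (rule abs_cont_on_lipschitz)
qed

definition zero_extension :: "real \<Rightarrow> real \<Rightarrow> (real \<Rightarrow> real) \<Rightarrow> real \<Rightarrow> real" where
  "zero_extension a b f x = (if a < x \<and> x < b then f x else 0)"

lemma set_integral_zero_extension:
  fixes h :: "real \<Rightarrow> real"
  assumes "continuous_on {a..b} h" and "-1 \<le> a" "b \<le> 1"
  shows "set_integrable lebesgue {-1<..<1} (zero_extension a b h)"
    and "(LINT x:{-1<..<1}|lebesgue. zero_extension a b h x) = integral {a..b} h"
proof -
  define H where "H x = (if x \<in> {a..b} then h x else 0)" for x
  have "h absolutely_integrable_on {a..b}"
    using assms(1) by (rule absolutely_integrable_continuous_real)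
  then have H: "H absolutely_integrable_on {-1<..<1}"
    unfolding H_def by (subst (asm) absolutely_integrable_restrict_UNIV[symmetric])
      (rule set_integrable_subset, auto)
  have spike: "zero_extension a b h x = H x" if "x \<notin> {a, b}" for x
    using that by (auto simp: zero_extension_def H_def)
  show int: "set_integrable lebesgue {-1<..<1} (zero_extension a b h)"
    by (rule absolutely_integrable_spike[OF H, where S = "{a, b}"]) (auto simp: spike)
  have "(LINT x:{-1<..<1}|lebesgue. zero_extension a b h x) = integral {-1<..<1} H"
    unfolding set_lebesgue_integral_eq_integral(2)[OF int]
    by (rule integral_spike[of "{a, b}"]) (auto simp: spike)
  also have "\<dots> = integral ({a..b} \<inter> {-1<..<1}) h"
    unfolding H_def by (rule integral_restrict_Int)
  also have "\<dots> = integral {a..b} h"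
    by (rule integral_spike_set; rule negligible_subset[of "{-1, 1}"]) (use assms in auto)
  finally show "(LINT x:{-1<..<1}|lebesgue. zero_extension a b h x) = integral {a..b} h" .
qed

lemma L2_11_zero_extension:
  assumes "continuous_on {a..b} h" and "-1 \<le> a" "b \<le> 1"
  shows "L2_11 (zero_extension a b h)"
proof -
  have "set_integrable lebesgue {-1<..<1} (zero_extension a b h)"
    using assms by (rule set_integral_zero_extension)
  moreover have "(\<lambda>x. (zero_extension a b h x)\<^sup>2) = zero_extension a b (\<lambda>x. (h x)\<^sup>2)"
    by (auto simp: zero_extension_def)
  moreover have "set_integrable lebesgue {-1<..<1} (zero_extension a b (\<lambda>x. (h x)\<^sup>2))"
    using assms by (intro set_integral_zero_extension continuous_intros)
  ultimately show ?thesis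
    unfolding L2_11_def set_borel_measurable_def
    by (auto simp: set_integrable_def intro: borel_measurable_integrable)
qed

lemma ae_deriv_zero_extension:
  assumes "\<And>x. a < x \<Longrightarrow> x < b \<Longrightarrow> (F has_real_derivative F' x) (at x)"
  shows "ae_deriv (zero_extension a b F) (zero_extension a b F')"
  unfolding ae_deriv_def
proof (rule AE_mp[OF AE_completion[OF AE_lborel_singleton[of a]]],
       rule AE_mp[OF AE_completion[OF AE_lborel_singleton[of b]]], intro AE_I2 impI)
  fix x :: real assume "x \<noteq> a" "x \<noteq> b"
  show "(zero_extension a b F has_real_derivative zero_extension a b F' x) (at x)"
  proof (cases "a < x \<and> x < b")
    case True
    have "(zero_extension a b F has_real_derivative F' x) (at x)"
      using True
      by (intro has_field_derivative_transform_within_open[OF assms, where S = "{a<..<b}"])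
         (auto simp: zero_extension_def)
    moreover have "zero_extension a b F' x = F' x" using True by (simp add: zero_extension_def)
    ultimately show ?thesis by simp
  next
    case False
    with \<open>x \<noteq> a\<close> \<open>x \<noteq> b\<close> have "x \<in> {..<a} \<union> {b<..}" by auto
    then have "(zero_extension a b F has_real_derivative 0) (at x)"
      by (intro has_field_derivative_transform_within_open[OF DERIV_const,
            where S = "{..<a} \<union> {b<..}"]) (auto simp: zero_extension_def)
    moreover have "zero_extension a b F' x = 0"
      unfolding zero_extension_def using False by (rule if_not_P)
    ultimately show ?thesis by simp
  qed
qed

lemma test_funD:
  assumes "test_fun \<phi>"
  shows "(\<phi> has_real_derivative deriv \<phi> x) (at x)" and "continuous_on S (deriv \<phi>)"
    and "\<phi> (-1) = 0" and "\<phi> 1 = 0"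
proof -
  have "\<phi> differentiable (at x)" "deriv \<phi> differentiable (at x)" for x
    using assms unfolding test_fun_def
    by (metis funpow_0, metis funpow_0 funpow_Suc_right comp_apply)
  then show "(\<phi> has_real_derivative deriv \<phi> x) (at x)" "continuous_on S (deriv \<phi>)"
    by (auto simp: DERIV_deriv_iff_real_differentiable
             intro!: continuous_at_imp_continuous_on differentiable_imp_continuous_within)
  show "\<phi> (-1) = 0" "\<phi> 1 = 0"
    using assms unfolding test_fun_def by force+
qed

lemma set_integral_zero_extension_by_parts:
  fixes Q w \<phi> :: "real \<Rightarrow> real"
  assumes ab: "-1 \<le> a" "a \<le> b" "b \<le> 1" and "test_fun \<phi>"
    and Q: "continuous_on {a..b} Q" "\<And>x. a < x \<Longrightarrow> x < b \<Longrightarrow> (Q has_real_derivative w x) (at x)"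
    and w: "continuous_on {a..b} w"
    and ends: "a = -1 \<or> Q a = 0" "b = 1 \<or> Q b = 0"
  shows "(LINT x:{-1<..<1}|lebesgue. zero_extension a b Q x * deriv \<phi> x)
    = - (LINT x:{-1<..<1}|lebesgue. zero_extension a b w x * \<phi> x)"
proof -
  note \<phi> = test_funD[OF \<open>test_fun \<phi>\<close>]
  have "continuous_on {a..b} \<phi>" using \<phi>(1) by (rule has_real_derivative_imp_continuous_on)
  have "(\<lambda>x. zero_extension a b Q x * deriv \<phi> x) = zero_extension a b (\<lambda>x. Q x * deriv \<phi> x)"
    by (auto simp: zero_extension_def)
  moreover have "continuous_on {a..b} (\<lambda>x. Q x * deriv \<phi> x)"
    by (intro continuous_intros Q(1) \<phi>(2))
  ultimately have lhs: "(LINT x:{-1<..<1}|lebesgue. zero_extension a b Q x * deriv \<phi> x)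
      = integral {a..b} (\<lambda>x. Q x * deriv \<phi> x)"
    using set_integral_zero_extension(2)[OF _ ab(1,3)] by simp
  have "(\<lambda>x. zero_extension a b w x * \<phi> x) = zero_extension a b (\<lambda>x. w x * \<phi> x)"
    by (auto simp: zero_extension_def)
  moreover have "continuous_on {a..b} (\<lambda>x. w x * \<phi> x)"
    by (intro continuous_intros w \<open>continuous_on {a..b} \<phi>\<close>)
  ultimately have rhs: "(LINT x:{-1<..<1}|lebesgue. zero_extension a b w x * \<phi> x)
      = integral {a..b} (\<lambda>x. w x * \<phi> x)"
    using set_integral_zero_extension(2)[OF _ ab(1,3)] by simp
  have "\<phi> b * Q b - \<phi> a * Q a = 0"
    using ends \<phi>(3,4) by auto
  moreover have "((\<lambda>x. \<phi> x * w x) has_integral integral {a..b} (\<lambda>x. \<phi> x * w x)) {a..b}"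
    by (intro integrable_integral integrable_continuous_interval continuous_intros w
        \<open>continuous_on {a..b} \<phi>\<close>)
  ultimately have "((\<lambda>x. deriv \<phi> x * Q x) has_integral - integral {a..b} (\<lambda>x. \<phi> x * w x)) {a..b}"
    using \<phi>(1) Q(2)
    by (intro integration_by_parts_interior[OF bounded_bilinear_mult ab(2)
          \<open>continuous_on {a..b} \<phi>\<close> Q(1)])
       (auto simp: has_real_derivative_iff_has_vector_derivative[symmetric])
  then have "integral {a..b} (\<lambda>x. deriv \<phi> x * Q x) = - integral {a..b} (\<lambda>x. \<phi> x * w x)"
    by (rule integral_unique)
  then show ?thesis unfolding lhs rhs by (simp add: mult_ac)
qed

lemma H2_alpha_zero_extensionI:
  fixes F F' Q W :: "real \<Rightarrow> real" and \<alpha> lam :: real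
  assumes ab: "-1 \<le> a" "a \<le> b" "b \<le> 1"
    and F: "continuous_on {a..b} F" "\<And>x. a < x \<Longrightarrow> x < b \<Longrightarrow> (F has_real_derivative F' x) (at x)"
    and W: "continuous_on {a..b} W" "\<And>x. a < x \<Longrightarrow> x < b \<Longrightarrow> \<bar>x\<bar> powr \<alpha> * (F' x)\<^sup>2 = W x"
    and Q: "continuous_on {a..b} Q" "\<And>x. a < x \<Longrightarrow> x < b \<Longrightarrow> \<bar>x\<bar> powr \<alpha> * F' x = Q x"
      "\<And>x. a < x \<Longrightarrow> x < b \<Longrightarrow> (Q has_real_derivative - lam * F x) (at x)"
    and Q_ends: "a = -1 \<or> Q a = 0" "b = 1 \<or> Q b = 0"
    and lac: "loc_abs_cont_on {0<..1} (zero_extension a b F)"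
      "loc_abs_cont_on {-1..<0} (zero_extension a b F)"
  shows "zero_extension a b F \<in> H2_alpha \<alpha>"
proof -
  let ?g = "zero_extension a b F'"
  have aed: "ae_deriv (zero_extension a b F) ?g" using F(2) by (rule ae_deriv_zero_extension)
  have "(\<lambda>x. \<bar>x\<bar> powr \<alpha> * (?g x)\<^sup>2) = zero_extension a b W"
    using W(2) by (auto simp: zero_extension_def)
  then have "set_integrable lebesgue {-1<..<1} (\<lambda>x. \<bar>x\<bar> powr \<alpha> * (?g x)\<^sup>2)"
    using set_integral_zero_extension(1)[OF W(1) ab(1,3)] by simp
  then have "zero_extension a b F \<in> H1_alpha \<alpha>"
    unfolding H1_alpha_def using L2_11_zero_extension[OF F(1) ab(1,3)] lac aed ab
    by (auto simp: zero_extension_def)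
  moreover have "L2_11 (zero_extension a b (\<lambda>x. - lam * F x))"
    using F(1) ab by (intro L2_11_zero_extension continuous_intros)
  moreover have "(LINT x:{-1<..<1}|lebesgue. \<bar>x\<bar> powr \<alpha> * ?g x * deriv \<phi> x)
      = - (LINT x:{-1<..<1}|lebesgue. zero_extension a b (\<lambda>x. - lam * F x) x * \<phi> x)"
    if "test_fun \<phi>" for \<phi>
  proof -
    have "(\<lambda>x. \<bar>x\<bar> powr \<alpha> * ?g x * deriv \<phi> x) = (\<lambda>x. zero_extension a b Q x * deriv \<phi> x)"
      using Q(2) by (auto simp: zero_extension_def)
    moreover have "continuous_on {a..b} (\<lambda>x. - lam * F x)"
      by (intro continuous_intros F(1))
    ultimately show ?thesis
      using set_integral_zero_extension_by_parts[OF ab that Q(1,3) _ Q_ends] by simp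
  qed
  ultimately show ?thesis unfolding H2_alpha_def using aed by blast
qed

lemma H2_alpha_zero_extensions:
  fixes G G' Q W :: "real \<Rightarrow> real" and \<alpha> lam :: real
  assumes G: "continuous_on {0..1} G" "\<And>x. 0 < x \<Longrightarrow> (G has_real_derivative G' x) (at x)"
      "continuous_on {0<..} G'" "G 1 = 0"
    and W: "continuous_on {0..1} W" "\<And>x. 0 < x \<Longrightarrow> x < 1 \<Longrightarrow> x powr \<alpha> * (G' x)\<^sup>2 = W x"
    and Q: "continuous_on {0..1} Q" "Q 0 = 0" "\<And>x. 0 < x \<Longrightarrow> x < 1 \<Longrightarrow> x powr \<alpha> * G' x = Q x"
      "\<And>x. 0 < x \<Longrightarrow> x < 1 \<Longrightarrow> (Q has_real_derivative - lam * G x) (at x)"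
  shows "zero_extension 0 1 G \<in> H2_alpha \<alpha>"
    and "zero_extension (-1) 0 (\<lambda>x. G (- x)) \<in> H2_alpha \<alpha>"
proof -
  have vanishing: "loc_abs_cont_on I (zero_extension a b F)"
    if "\<And>x. x \<in> I \<Longrightarrow> x \<notin> {a<..<b}" for I a b F
    using that by (intro loc_abs_cont_onI_derivative[of I "\<lambda>_. 0" "\<lambda>_. 0"])
      (auto simp: zero_extension_def)
  show "zero_extension 0 1 G \<in> H2_alpha \<alpha>"
  proof (rule H2_alpha_zero_extensionI[where F' = G' and W = W and Q = Q and lam = lam])
    show "loc_abs_cont_on {0<..1} (zero_extension 0 1 G)"
      using G(2,4) by (intro loc_abs_cont_onI_derivative[of _ G G'] continuous_on_subset[OF G(3)])
        (auto simp: zero_extension_def)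
  qed (use G W Q in \<open>auto intro: vanishing\<close>)
  have reflect: "continuous_on {-1..0} (\<lambda>x. f (- x))"
    if "continuous_on {0..1} f" for f :: "real \<Rightarrow> real"
    by (rule continuous_on_compose2[OF that continuous_on_minus[OF continuous_on_id]]) auto
  have reflect_deriv: "((\<lambda>x. f (- x)) has_real_derivative - f' (- x)) (at x)"
    if "(f has_real_derivative f' (- x)) (at (- x))" for f f' :: "real \<Rightarrow> real" and x
    using DERIV_chain2[OF that DERIV_minus[OF DERIV_ident]] by simp
  show "zero_extension (-1) 0 (\<lambda>x. G (- x)) \<in> H2_alpha \<alpha>"
  proof (rule H2_alpha_zero_extensionI[where F' = "\<lambda>x. - G' (- x)" and W = "\<lambda>x. W (- x)"
        and Q = "\<lambda>x. - Q (- x)" and lam = lam])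
    show "loc_abs_cont_on {-1..<0} (zero_extension (-1) 0 (\<lambda>x. G (- x)))"
      using G(3,4) by (intro loc_abs_cont_onI_derivative[of _ "\<lambda>x. G (- x)" "\<lambda>x. - G' (- x)"])
        (auto simp: zero_extension_def intro!: reflect_deriv G(2) continuous_on_minus
          continuous_on_compose2[OF G(3)])
    show "((\<lambda>x. - Q (- x)) has_real_derivative - lam * G (- x)) (at x)" if "-1 < x" "x < 0" for x
      using reflect_deriv[of Q "\<lambda>x. - lam * G x" x] Q(4)[of "- x"] that
      by (auto intro: DERIV_minus)
    show "continuous_on {-1..0} (\<lambda>x. - Q (- x))"
      by (intro continuous_on_minus reflect Q(1))
  qed (use G W Q in \<open>auto intro!: vanishing reflect reflect_deriv\<close>)
qed

section \<open>The Bessel profiles\<close>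

lemma nu_a_gt_minus_one: "\<alpha> < 2 \<Longrightarrow> -1 < nu_a \<alpha>"
  by (simp add: nu_a_def field_simps)

lemma bessel_J_profile:
  assumes "\<alpha> < 2" "0 < j" "0 < x"
  shows "x powr ((1 - \<alpha>) / 2) * bessel_J (nu_a \<alpha>) (j * x powr kappa_a \<alpha>)
    = (j / 2) powr nu_a \<alpha> * bessel_series (nu_a \<alpha>) (j\<^sup>2 * x powr (2 - \<alpha>))"
proof -
  let ?nu = "nu_a \<alpha>" and ?k = "kappa_a \<alpha>"
  let ?B = "bessel_series ?nu (j\<^sup>2 * x powr (2 - \<alpha>))"
  have "((j / 2) * x powr ?k) powr ?nu = (j / 2) powr ?nu * (x powr ?k) powr ?nu"
    using powr_mult[of "j / 2" "x powr ?k" ?nu] assms by simp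
  moreover have "?k * ?nu = (\<alpha> - 1) / 2"
    using assms by (simp add: kappa_a_def nu_a_def field_simps)
  ultimately have "((j * x powr ?k) / 2) powr ?nu = (j / 2) powr ?nu * x powr ((\<alpha> - 1) / 2)"
    by (simp add: powr_powr)
  moreover have "x powr ?k * x powr ?k = x powr (2 - \<alpha>)"
    by (simp add: kappa_a_def flip: powr_add)
  then have "(j * x powr ?k)\<^sup>2 = j\<^sup>2 * x powr (2 - \<alpha>)"
    by (simp add: power2_eq_square mult_ac)
  ultimately have "bessel_J ?nu (j * x powr ?k) = (j / 2) powr ?nu * x powr ((\<alpha> - 1) / 2) * ?B"
    using assms bessel_J_eq_bessel_series[OF nu_a_gt_minus_one[OF assms(1)], of "j * x powr ?k"]
    by simp
  then have "x powr ((1 - \<alpha>) / 2) * bessel_J ?nu (j * x powr ?k)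
      = (j / 2) powr ?nu * ?B * (x powr ((1 - \<alpha>) / 2) * x powr ((\<alpha> - 1) / 2))"
    by (simp only: mult_ac)
  also have "x powr ((1 - \<alpha>) / 2) * x powr ((\<alpha> - 1) / 2) = 1"
    using assms by (simp add: add_divide_distrib[symmetric] flip: powr_add)
  finally show ?thesis by simp
qed

lemma has_real_derivative_bessel_flux:
  assumes nu: "-1 < nu" and "\<beta> * (nu + 1) = 1" and "0 < x"
  shows "((\<lambda>x. x * bessel_series' nu (\<mu> * x powr \<beta>)) has_real_derivative
    - \<beta> / 4 * bessel_series nu (\<mu> * x powr \<beta>)) (at x)"
proof -
  let ?s = "\<mu> * x powr \<beta>"
  have "((\<lambda>x. x * bessel_series' nu (\<mu> * x powr \<beta>)) has_real_derivative
      bessel_series' nu ?s + \<beta> * (?s * bessel_series'' nu ?s)) (at x)"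
    using nu \<open>0 < x\<close> by (auto intro!: derivative_eq_intros simp: powr_diff field_simps)
  moreover have ode: "?s * bessel_series'' nu ?s
      = - (nu + 1) * bessel_series' nu ?s - bessel_series nu ?s / 4"
    using bessel_series_ode[OF nu, of ?s] by (simp add: algebra_simps)
  have "bessel_series' nu ?s + \<beta> * (?s * bessel_series'' nu ?s)
      = (1 - \<beta> * (nu + 1)) * bessel_series' nu ?s - \<beta> / 4 * bessel_series nu ?s"
    unfolding ode by (simp add: algebra_simps)
  ultimately show ?thesis using \<open>\<beta> * (nu + 1) = 1\<close> by simp
qed

lemma H2_alpha_bessel_profile:
  fixes \<alpha> C \<mu> :: real
  assumes "\<alpha> < 2" and zero: "bessel_series (nu_a \<alpha>) \<mu> = 0"
  defines "G \<equiv> \<lambda>x. C * bessel_series (nu_a \<alpha>) (\<mu> * x powr (2 - \<alpha>))"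
  shows "zero_extension 0 1 G \<in> H2_alpha \<alpha>"
    and "zero_extension (-1) 0 (\<lambda>x. G (- x)) \<in> H2_alpha \<alpha>"
proof -
  define nu \<beta> where "nu = nu_a \<alpha>" and "\<beta> = 2 - \<alpha>"
  have nu: "-1 < nu" unfolding nu_def using \<open>\<alpha> < 2\<close> by (rule nu_a_gt_minus_one)
  have "0 < \<beta>" and \<beta>_nu: "\<beta> * (nu + 1) = 1"
    using \<open>\<alpha> < 2\<close> by (auto simp: \<beta>_def nu_def nu_a_def field_simps)
  let ?s = "\<lambda>x. \<mu> * x powr \<beta>"
  have G: "G = (\<lambda>x. C * bessel_series nu (?s x))" unfolding G_def nu_def \<beta>_def ..
  define G' where "G' x = C * (bessel_series' nu (?s x) * (\<mu> * (\<beta> * x powr (\<beta> - 1))))" for x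
  define Q where "Q x = C * \<mu> * \<beta> * (x * bessel_series' nu (?s x))" for x
  define W where "W x = (C * \<mu> * \<beta>)\<^sup>2 * (x powr \<beta> * (bessel_series' nu (?s x))\<^sup>2)" for x
  have powr_\<beta>: "continuous_on {0..1} (\<lambda>x::real. x powr \<beta>)"
    using \<open>0 < \<beta>\<close> by (intro continuous_on_powr' continuous_on_id continuous_on_const) auto
  have Q_eq: "x powr \<alpha> * G' x = Q x" if "0 < x" for x
  proof -
    have "x powr \<alpha> * x powr (\<beta> - 1) = x"
      using that by (simp add: \<beta>_def flip: powr_add)
    then show ?thesis unfolding G'_def Q_def by (simp add: mult_ac)
  qed
  have W_eq: "x powr \<alpha> * (G' x)\<^sup>2 = W x" if "0 < x" for x
  proof -
    have "x powr \<alpha> * (G' x)\<^sup>2 = Q x * G' x"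
      using Q_eq[OF that] by (simp add: power2_eq_square mult_ac)
    also have "\<dots> = W x"
      using that unfolding Q_def G'_def W_def by (simp add: power2_eq_square powr_diff mult_ac)
    finally show ?thesis .
  qed
  have G_deriv: "(G has_real_derivative G' x) (at x)" if "0 < x" for x
    unfolding G G'_def by (intro DERIV_cmult bessel_series_chain nu has_real_derivative_powr that)
  have Q_deriv: "(Q has_real_derivative - (\<mu> * \<beta>\<^sup>2 / 4) * G x) (at x)" if "0 < x" for x
    using DERIV_cmult[OF has_real_derivative_bessel_flux[OF nu \<beta>_nu that], of "C * \<mu> * \<beta>"]
    unfolding Q_def G by (simp add: power2_eq_square mult_ac)
  have "continuous_on {0..1} G" "continuous_on {0..1} W" "continuous_on {0..1} Q"
    unfolding G W_def Q_def by (intro continuous_intros nu powr_\<beta>)+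
  moreover have "continuous_on {0<..} G'"
    unfolding G'_def by (intro continuous_intros nu) auto
  moreover have "G 1 = 0" "Q 0 = 0"
    using zero by (simp_all add: G Q_def nu_def)
  ultimately show "zero_extension 0 1 G \<in> H2_alpha \<alpha>"
    and "zero_extension (-1) 0 (\<lambda>x. G (- x)) \<in> H2_alpha \<alpha>"
    using H2_alpha_zero_extensions[OF _ G_deriv _ _ _ W_eq _ _ Q_eq Q_deriv] by simp_all
qed

theorem lemma4p3:
  fixes \<alpha> :: real and m :: nat
  assumes "1 \<le> \<alpha>" and "\<alpha> < 2" and "1 \<le> m"
  shows "Phi_r \<alpha> m \<in> H2_alpha \<alpha> \<and> Phi_l \<alpha> m \<in> H2_alpha \<alpha>"
proof -
  \<comment> \<open>Only \<alpha> < 2 is used: 1 \<le> \<alpha> merely keeps the order nu nonnegative, and for m = 0 the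
    truncated subtraction in bessel_zero selects the first zero, as for m = 1.\<close>
  let ?nu = "nu_a \<alpha>"
  define j where "j = bessel_zero ?nu m"
  have "0 < j" "bessel_J ?nu j = 0"
    using bessel_zero_is_root[OF nu_a_gt_minus_one[OF \<open>\<alpha> < 2\<close>]] by (auto simp: j_def)
  then have "bessel_series ?nu (j\<^sup>2) = 0"
    using bessel_J_eq_bessel_series[OF nu_a_gt_minus_one[OF \<open>\<alpha> < 2\<close>]] by simp
  note profile = H2_alpha_bessel_profile[OF \<open>\<alpha> < 2\<close> this, of "(j / 2) powr ?nu"]
  have "Phi_r \<alpha> m = zero_extension 0 1
      (\<lambda>x. (j / 2) powr ?nu * bessel_series ?nu (j\<^sup>2 * x powr (2 - \<alpha>)))"
    using \<open>0 < j\<close> \<open>\<alpha> < 2\<close>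
    by (auto simp: fun_eq_iff Phi_r_def zero_extension_def j_def bessel_J_profile)
  moreover have "Phi_l \<alpha> m = zero_extension (-1) 0
      (\<lambda>x. (j / 2) powr ?nu * bessel_series ?nu (j\<^sup>2 * (- x) powr (2 - \<alpha>)))"
    using \<open>0 < j\<close> \<open>\<alpha> < 2\<close>
    by (auto simp: fun_eq_iff Phi_l_def zero_extension_def j_def bessel_J_profile)
  ultimately show ?thesis using profile by simp
qed

end
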